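(* Let $m$ be an odd prime, $\gamma_1,\gamma_2\in\mathbb Z$ and $n\in\mathbb Z^+$. Let $\underline a=(a_0,a_1,\dots)$ be an almost $m$-ary nearly perfect sequence of type $(\gamma_1,\gamma_2)$ and period $n+2$ with exactly two zero-symbols in each period, and suppose these are consecutive, i.e. $a_j=a_{j+1}=0$ for some $j$ (indices modulo $n+2$). Then $\underline a$ is symmetric: $a_x=a_{2j+1-x}$ for all $x$ (indices modulo $n+2$).
   Context: Let $\zeta_m\in\mathbb C$ be a primitive $m$-th root of unity. A sequence $\underline a=(a_0,a_1,\dots)$ of period $N$ is an almost $m$-ary sequence with $s$ zero-symbols if in each period exactly $s$ entries are $0$ and every other entry is of the form $\zeta_m^{b}$ for some integer $b$. Its autocorrelation function is $C_{\underline a}(t)=\sum_{i=0}^{N-1}a_i\overline{a_{i+t}}$ (indices modulo $N$, bar = complex conjugation). $\underline a$ is a nearly perfect sequence (NPS) of type $(\gamma_1,\gamma_2)$ if every out-of-phase autocorrelation coefficient $C_{\underline a}(t)$, $1\le t\le N-1$, equals $\gamma_1$ or $\gamma_2$. *)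

theory Defs
  imports Complex_Main "HOL-Computational_Algebra.Primes"
begin

definition root_of_unity :: "nat \<Rightarrow> complex" where
  "root_of_unity m = cis (2 * pi / real m)"

definition periodic_seq :: "int \<Rightarrow> (int \<Rightarrow> complex) \<Rightarrow> bool" where
  "periodic_seq N a \<longleftrightarrow> (\<forall>i. a (i + N) = a i)"

definition almost_mary :: "nat \<Rightarrow> int \<Rightarrow> nat \<Rightarrow> (int \<Rightarrow> complex) \<Rightarrow> bool" where
  "almost_mary m N s a \<longleftrightarrow> periodic_seq N a \<and>
     card {i \<in> {0..<N}. a i = 0} = s \<and>
     (\<forall>i \<in> {0..<N}. a i \<noteq> 0 \<longrightarrow> (\<exists>b::int. a i = root_of_unity m powi b))"

definition autocorr :: "int \<Rightarrow> (int \<Rightarrow> complex) \<Rightarrow> int \<Rightarrow> complex" where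
  "autocorr N a t = (\<Sum>i\<in>{0..<N}. a i * cnj (a (i + t)))"

definition nearly_perfect :: "int \<Rightarrow> (int \<Rightarrow> complex) \<Rightarrow> complex \<Rightarrow> complex \<Rightarrow> bool" where
  "nearly_perfect N a g1 g2 \<longleftrightarrow>
     (\<forall>t \<in> {1..N-1}. autocorr N a t = g1 \<or> autocorr N a t = g2)"

end

theory Submission
  imports Defs "HOL-Computational_Algebra.Polynomial_Factorial"
begin

text \<open>
  Shift the sequence so that its zeros sit at \<open>0\<close> and \<open>1\<close>, and write every other entry as
  \<open>\<zeta> ^ e i\<close>. The autocorrelation at lag \<open>t\<close> is then an integer sum of the powers
  \<open>\<zeta> ^ (e i - e (i + t))\<close>. As \<open>1 + x + \<dots> + x ^ (m - 1)\<close> is irreducible (Eisenstein), every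
  integer polynomial vanishing at \<open>\<zeta>\<close> is a multiple of it; differentiating at \<open>x = 1\<close> shows that
  the exponents in such a sum add up to a multiple of \<open>m\<close> (here \<open>m\<close> odd is used). At lag \<open>t\<close> the
  exponent sum collapses to \<open>d t + d (t + 1)\<close> with \<open>d x = e x - e (1 - x)\<close>, and \<open>d 1 = 0\<close>, so
  \<open>m\<close> divides every \<open>d x\<close>, i.e. \<open>a x = a (1 - x)\<close>.
\<close>

section \<open>Eisenstein's criterion\<close>

lemma prime_elem_not_dvd_coeff_mult:
  fixes p :: "'a :: idom" and G H :: "'a poly"
  assumes "prime_elem p" and "\<not> p dvd coeff G k" and "\<And>i. i < k \<Longrightarrow> p dvd coeff G i"
    and "\<not> p dvd coeff H 0"
  shows "\<not> p dvd coeff (G * H) k"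
proof
  assume "p dvd coeff (G * H) k"
  moreover have "coeff (G * H) k = (\<Sum>i<k. coeff G i * coeff H (k - i)) + coeff G k * coeff H 0"
    by (simp add: coeff_mult lessThan_Suc_atMost[symmetric])
  moreover have "p dvd (\<Sum>i<k. coeff G i * coeff H (k - i))"
    using assms(3) by (auto intro: dvd_sum)
  ultimately have "p dvd coeff G k * coeff H 0"
    by (metis dvd_add_right_iff)
  with assms show False
    by (simp add: prime_elem_dvd_mult_iff)
qed

lemma eisenstein_criterion:
  fixes p :: "'a :: idom" and G H :: "'a poly"
  assumes p: "prime_elem p"
    and dvd: "\<And>k. k < degree (G * H) \<Longrightarrow> p dvd coeff (G * H) k"
    and not_dvd_0: "\<not> p\<^sup>2 dvd coeff (G * H) 0"
    and not_dvd_lead: "\<not> p dvd lead_coeff (G * H)"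
  shows "degree G = 0 \<or> degree H = 0"
proof (rule ccontr)
  assume "\<not> (degree G = 0 \<or> degree H = 0)"
  then have deg: "degree G > 0" "degree H > 0" by auto
  have lead: "\<not> p dvd lead_coeff G" "\<not> p dvd lead_coeff H"
    using not_dvd_lead by (auto simp: lead_coeff_mult)
  have coeff_0: "coeff (G * H) 0 = coeff G 0 * coeff H 0"
    by (simp add: coeff_mult)
  have degree_GH: "degree (G * H) = degree G + degree H"
    using deg by (intro degree_mult_eq) auto
  have "p dvd coeff G 0 * coeff H 0"
    using dvd[of 0] deg by (simp add: degree_GH coeff_0)
  moreover have "\<not> (p dvd coeff G 0 \<and> p dvd coeff H 0)"
    using not_dvd_0 by (auto simp: coeff_0 power2_eq_square intro: mult_dvd_mono)
  ultimately consider "p dvd coeff G 0" "\<not> p dvd coeff H 0" | "p dvd coeff H 0" "\<not> p dvd coeff G 0"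
    using p by (auto simp: prime_elem_dvd_mult_iff)
  note cases = this
  \<comment> \<open>if \<open>p\<close> divides \<open>coeff A 0\<close> but not \<open>coeff B 0\<close>, the first coefficient of \<open>A\<close> not
      divisible by \<open>p\<close> yields a coefficient of \<open>A * B\<close> below its degree not divisible by \<open>p\<close>\<close>
  have False if "p dvd coeff A 0" "\<not> p dvd coeff B 0" "\<not> p dvd lead_coeff A"
    and "degree A < degree (G * H)" "A * B = G * H" for A B
  proof -
    define k where "k = (LEAST i. \<not> p dvd coeff A i)"
    have "\<not> p dvd coeff A k"
      unfolding k_def by (rule LeastI[of _ "degree A"]) (use that in auto)
    moreover have "k \<le> degree A"
      unfolding k_def by (rule Least_le) (use that in auto)
    moreover have "\<And>i. i < k \<Longrightarrow> p dvd coeff A i"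
      unfolding k_def using not_less_Least by blast
    ultimately show False
      using prime_elem_not_dvd_coeff_mult[OF p, of A k B] dvd[of k] that by auto
  qed
  from cases this[of G H] this[of H G] lead deg show False
    by (cases; simp add: degree_GH mult.commute)
qed

section \<open>The polynomial \<open>1 + x + \<dots> + x ^ (n - 1)\<close>\<close>

definition geometric_poly :: "nat \<Rightarrow> 'a :: comm_ring_1 poly" where
  "geometric_poly n = (\<Sum>k<n. monom 1 k)"

lemma coeff_geometric_poly: "coeff (geometric_poly n) k = (if k < n then 1 else 0)"
  by (simp add: geometric_poly_def coeff_sum coeff_monom)

lemma geometric_poly_times_x_minus_1: "geometric_poly n * [:-1, 1:] = monom 1 n - 1"
proof (induction n)
  case 0
  then show ?case by (simp add: geometric_poly_def)
next
  case (Suc n)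
  have "[:-1, 1:] = monom 1 1 - (1 :: 'a poly)"
    by (simp add: monom_Suc monom_0 one_pCons)
  then have step: "monom 1 n * [:-1, 1:] = monom 1 (Suc n) - (monom 1 n :: 'a poly)"
    by (simp add: right_diff_distrib mult_monom)
  have "(geometric_poly (Suc n) :: 'a poly) * [:-1, 1:] = geometric_poly n * [:-1, 1:] + monom 1 n * [:-1, 1:]"
    by (simp only: geometric_poly_def sum.lessThan_Suc distrib_right)
  also have "\<dots> = (monom 1 n - 1) + (monom 1 (Suc n) - monom 1 n)"
    by (simp only: Suc.IH step)
  finally show ?case
    by simp
qed

lemma degree_geometric_poly: "degree (geometric_poly n :: 'a :: comm_ring_1 poly) = n - 1"
proof (rule order_antisym)
  show "degree (geometric_poly n :: 'a poly) \<le> n - 1"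
    by (rule degree_le) (auto simp: coeff_geometric_poly)
  show "n - 1 \<le> degree (geometric_poly n :: 'a poly)"
    by (cases n) (auto intro: le_degree simp: coeff_geometric_poly)
qed

lemma poly_geometric_poly_1: "poly (geometric_poly n) 1 = of_nat n"
  by (simp add: geometric_poly_def poly_sum poly_monom)

lemma poly_pderiv_geometric_poly_1:
  "poly (pderiv (geometric_poly n)) 1 = (\<Sum>k<n. of_nat k :: 'a :: idom)"
  by (simp add: geometric_poly_def higher_pderiv_sum[of 1, simplified] poly_sum pderiv_monom poly_monom)

lemma dvd_poly_pderiv_geometric_poly_1:
  assumes "odd n"
  shows "int n dvd poly (pderiv (geometric_poly n)) 1"
proof -
  obtain q where n: "n = Suc (2 * q)"
    using assms oddE by fastforce
  have "2 * poly (pderiv (geometric_poly n)) 1 = 2 * (\<Sum>k = 0..2 * q. of_nat k :: int)"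
    by (simp add: poly_pderiv_geometric_poly_1 n lessThan_Suc_atMost atLeast0AtMost)
  also have "\<dots> = 2 * (int n * int q)"
    by (simp add: double_gauss_sum n algebra_simps)
  finally show ?thesis
    by simp
qed

lemma pcompose_monom_1: "pcompose (monom 1 n) q = (q ^ n :: 'a :: comm_semiring_1 poly)"
  by (induction n) (simp_all add: monom_0 monom_Suc pcompose_pCons)

lemma coeff_geometric_poly_pcompose_x_plus_1:
  "coeff (pcompose (geometric_poly n) [:1, 1:]) k = (of_nat (n choose Suc k) :: 'a :: comm_ring_1)"
proof -
  have shift: "pcompose [:-1, 1:] [:1, 1:] = ([:0, 1:] :: 'a poly)"
    by (simp add: pcompose_pCons)
  have "pcompose ((geometric_poly n :: 'a poly) * [:-1, 1:]) [:1, 1:] = pcompose (monom 1 n - 1) [:1, 1:]"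
    by (simp only: geometric_poly_times_x_minus_1)
  then have "pcompose (geometric_poly n) [:1, 1:] * [:0, 1:] = ([:1, 1:] ^ n - 1 :: 'a poly)"
    by (simp only: pcompose_mult pcompose_diff pcompose_monom_1 pcompose_1 shift)
  then have "coeff ([:0, 1:] * pcompose (geometric_poly n) [:1, 1:]) (Suc k)
      = coeff ([:1, 1:] ^ n - 1 :: 'a poly) (Suc k)"
    by (simp add: mult.commute[of "[:0, 1:]"])
  then have "coeff (pcompose (geometric_poly n) [:1, 1:]) k
      = coeff ([:1, 1:] ^ n - 1 :: 'a poly) (Suc k)"
    by simp
  also have "\<dots> = of_nat (n choose Suc k)"
  proof (cases "Suc k \<le> n")
    case True
    then show ?thesis by (simp add: coeff_linear_poly_power)
  next
    case False
    then show ?thesis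
      by (simp add: coeff_eq_0 degree_linear_power binomial_eq_0)
  qed
  finally show ?thesis .
qed

lemma irreducible_geometric_poly:
  assumes p: "prime p"
  shows "irreducible (geometric_poly p :: int poly)"
proof (rule irreducibleI)
  have p2: "p \<ge> 2"
    using p by (simp add: prime_ge_2_nat)
  then have coeff_0: "coeff (geometric_poly p :: int poly) 0 = 1"
    by (simp add: coeff_geometric_poly)
  then show "geometric_poly p \<noteq> (0 :: int poly)"
    by auto
  show "\<not> is_unit (geometric_poly p :: int poly)"
  proof
    assume "is_unit (geometric_poly p :: int poly)"
    then have "degree (geometric_poly p :: int poly) = 0"
      by (auto simp: is_unit_poly_iff)
    with p2 show False
      by (simp add: degree_geometric_poly)
  qed
  fix A B :: "int poly"
  assume AB: "geometric_poly p = A * B"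
  have "coeff A 0 * coeff B 0 = 1"
    using coeff_0 unfolding AB by (simp add: coeff_mult)
  then have units: "is_unit (coeff A 0)" "is_unit (coeff B 0)"
    by (metis dvd_triv_left, metis dvd_triv_right)
  define F :: "int poly" where "F = pcompose (geometric_poly p) [:1, 1:]"
  have F: "F = pcompose A [:1, 1:] * pcompose B [:1, 1:]"
    by (simp add: F_def AB pcompose_mult)
  have degree_F: "degree F = p - 1"
    by (simp add: F_def degree_pcompose degree_geometric_poly)
  \<comment> \<open>Eisenstein's criterion applies to the shift \<open>x \<mapsto> x + 1\<close>, whose coefficients are
      binomial coefficients \<open>p choose (k + 1)\<close>\<close>
  have "degree (pcompose A [:1, 1:]) = 0 \<or> degree (pcompose B [:1, 1:]) = 0"
  proof (rule eisenstein_criterion[of "int p"], fold F)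
    show "prime_elem (int p)"
      using p by simp
    show "int p dvd coeff F k" if "k < degree F" for k
    proof -
      have "p dvd p choose Suc k"
        using that p by (intro dvd_choose_prime) (auto simp: degree_F)
      then show ?thesis
        by (simp add: F_def coeff_geometric_poly_pcompose_x_plus_1)
    qed
    show "\<not> (int p)\<^sup>2 dvd coeff F 0"
      unfolding F_def coeff_geometric_poly_pcompose_x_plus_1 using p2 by (simp add: power2_eq_square)
    show "\<not> int p dvd lead_coeff F"
      unfolding degree_F unfolding F_def coeff_geometric_poly_pcompose_x_plus_1 using p2 by simp
  qed
  then have "degree A = 0 \<or> degree B = 0"
    by (simp add: degree_pcompose)
  with units show "is_unit A \<or> is_unit B"
    by (auto simp: is_unit_poly_iff elim!: degree_eq_zeroE)
qed

lemma dvd_poly_pderiv_1_if_geometric_poly_dvd: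
  assumes "odd n" and "geometric_poly n dvd Q"
  shows "int n dvd poly (pderiv Q) 1"
proof -
  obtain T where Q: "Q = geometric_poly n * T"
    using assms(2) by (elim dvdE)
  have "poly (pderiv Q) 1
      = poly (geometric_poly n) 1 * poly (pderiv T) 1 + poly (pderiv (geometric_poly n)) 1 * poly T 1"
    by (simp add: Q pderiv_mult)
  with dvd_poly_pderiv_geometric_poly_1[OF assms(1)] show ?thesis
    by (simp add: poly_geometric_poly_1)
qed

section \<open>Integer polynomials vanishing at a point\<close>

definition ipoly :: "int poly \<Rightarrow> 'a :: comm_ring_1 \<Rightarrow> 'a" where
  "ipoly Q z = poly (map_poly of_int Q) z"

lemma ipoly_add: "ipoly (P + Q) z = ipoly P z + ipoly Q z"
proof -
  have "map_poly of_int (P + Q) = map_poly of_int P + (map_poly of_int Q :: 'a poly)"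
    by (rule poly_eqI) (simp add: coeff_map_poly)
  then show ?thesis
    by (simp add: ipoly_def)
qed

lemma ipoly_mult: "ipoly (P * Q) z = ipoly P z * ipoly Q z"
proof -
  have "map_poly of_int (P * Q) = map_poly of_int P * (map_poly of_int Q :: 'a poly)"
    by (rule poly_eqI) (simp add: coeff_map_poly coeff_mult)
  then show ?thesis
    by (simp add: ipoly_def)
qed

lemma ipoly_0 [simp]: "ipoly 0 z = 0"
  by (simp add: ipoly_def)

lemma ipoly_const [simp]: "ipoly [:c:] z = of_int c"
  by (simp add: ipoly_def map_poly_pCons)

lemma ipoly_smult: "ipoly (smult c Q) z = of_int c * ipoly Q z"
  using ipoly_mult[of "[:c:]" Q z] by simp

lemma ipoly_sum: "ipoly (\<Sum>i\<in>S. Q i) z = (\<Sum>i\<in>S. ipoly (Q i) z)"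
  by (induction S rule: infinite_finite_induct) (simp_all add: ipoly_add)

lemma ipoly_monom_1 [simp]: "ipoly (monom 1 k) z = z ^ k"
  by (simp add: ipoly_def map_poly_monom poly_monom)

lemma degree_le_if_ipoly_root:
  fixes P R :: "int poly" and z :: "'a :: {comm_ring_1, ring_char_0}"
  assumes P: "prime_elem P" "ipoly P z = 0"
  shows "R \<noteq> 0 \<Longrightarrow> ipoly R z = 0 \<Longrightarrow> degree P \<le> degree R"
proof (induction "degree R" arbitrary: R rule: less_induct)
  case less
  obtain q r where qr: "pseudo_divmod P R = (q, r)"
    by fastforce
  define l where "l = lead_coeff R ^ (Suc (degree P) - degree R)"
  have l: "l \<noteq> 0"
    using less.prems(1) by (simp add: l_def)
  have division: "smult l P = R * q + r"
    using pseudo_divmod(1)[OF less.prems(1) qr] by (simp add: l_def)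
  have "ipoly r z = 0"
    using arg_cong[OF division, of "\<lambda>f. ipoly f z"] P(2) less.prems(2)
    by (simp add: ipoly_smult ipoly_add ipoly_mult)
  show ?case
  proof (cases "r = 0")
    case False
    then have "degree r < degree R"
      using pseudo_divmod(2)[OF less.prems(1) qr] by simp
    with less.hyps[OF this False \<open>ipoly r z = 0\<close>] show ?thesis
      by simp
  next
    case True
    have "P dvd smult l P"
      by (simp add: dvd_smult)
    with division True have "P dvd R * q"
      by simp
    then consider "P dvd R" | "P dvd q"
      using P(1) prime_elem_dvd_mult_iff by blast
    then show ?thesis
    proof cases
      case 1
      then show ?thesis
        using less.prems(1) by (rule dvd_imp_degree_le)
    next
      \<comment> \<open>then \<open>R\<close> divides the constant \<open>l\<close>, but a nonzero constant has no root\<close>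
      case 2
      then obtain T where "q = P * T"
        by (elim dvdE)
      with division True have "P * [:l:] = P * (R * T)"
        by (simp add: ac_simps)
      then have RT: "[:l:] = R * T"
        using P(1) by (subst (asm) mult_left_cancel) (auto simp: prime_elem_def)
      with l have "T \<noteq> 0"
        by auto
      with RT less.prems(1) have "degree R + degree T = 0"
        by (metis degree_mult_eq degree_pCons_0)
      then have "degree R = 0"
        by simp
      then obtain c where "R = [:c:]"
        by (elim degree_eq_zeroE)
      with less.prems show ?thesis
        by simp
    qed
  qed
qed

lemma dvd_if_ipoly_root:
  fixes P Q :: "int poly" and z :: "'a :: {comm_ring_1, ring_char_0}"
  assumes "prime_elem P" and "lead_coeff P = 1" and "ipoly P z = 0" and "ipoly Q z = 0"
  shows "P dvd Q"
proof -
  have "P \<noteq> 0"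
    using assms(1) by auto
  obtain q r where qr: "pseudo_divmod Q P = (q, r)"
    by fastforce
  have division: "Q = P * q + r"
    using pseudo_divmod(1)[OF \<open>P \<noteq> 0\<close> qr] assms(2) by simp
  have "ipoly r z = 0"
    using arg_cong[OF division, of "\<lambda>f. ipoly f z"] assms(3,4) by (simp add: ipoly_add ipoly_mult)
  have "r = 0"
  proof (rule ccontr)
    assume "r \<noteq> 0"
    then have "degree r < degree P"
      using pseudo_divmod(2)[OF \<open>P \<noteq> 0\<close> qr] by simp
    with degree_le_if_ipoly_root[OF assms(1,3) \<open>r \<noteq> 0\<close> \<open>ipoly r z = 0\<close>] show False
      by simp
  qed
  with division show ?thesis
    by simp
qed

section \<open>Integral sums of roots of unity\<close>

lemma root_of_unity_nonzero [simp]: "root_of_unity n \<noteq> 0"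
  by (simp add: root_of_unity_def)

lemma root_of_unity_power_self: "n > 0 \<Longrightarrow> root_of_unity n ^ n = 1"
  by (simp add: root_of_unity_def DeMoivre)

lemma root_of_unity_neq_1:
  assumes "n \<ge> 2"
  shows "root_of_unity n \<noteq> 1"
proof -
  have "2 * pi / real n \<le> pi"
    using assms by (simp add: field_simps)
  then have "cos (2 * pi / real n) < cos 0"
    using assms by (intro cos_monotone_0_pi) auto
  then show ?thesis
    by (auto simp: root_of_unity_def complex_eq_iff)
qed

lemma root_of_unity_powi_mod:
  "root_of_unity n powi k = root_of_unity n powi (k mod int n)"
proof (cases "n = 0")
  case False
  have "root_of_unity n powi k = root_of_unity n powi (k mod int n + int n * (k div int n))"
    by simp
  also have "\<dots>
      = root_of_unity n powi (k mod int n) * (root_of_unity n powi int n) powi (k div int n)"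
    by (subst power_int_add) (simp_all add: power_int_mult)
  finally show ?thesis
    using False by (simp add: root_of_unity_power_self)
qed simp

lemma root_of_unity_powi_eq_power:
  "n > 0 \<Longrightarrow> root_of_unity n powi k = root_of_unity n ^ nat (k mod int n)"
  by (subst root_of_unity_powi_mod) (simp add: power_int_def)

lemma cnj_root_of_unity: "cnj (root_of_unity n) = inverse (root_of_unity n)"
  by (simp add: root_of_unity_def cis_cnj cis_inverse)

lemma ipoly_geometric_poly_root_of_unity:
  assumes "n \<ge> 2"
  shows "ipoly (geometric_poly n) (root_of_unity n) = 0"
  using assms root_of_unity_neq_1[OF assms]
  by (simp add: geometric_poly_def ipoly_sum sum_gp_strict root_of_unity_power_self)

lemma dvd_exponent_sum_if_root_of_unity_sum_in_Ints:
  fixes r :: "'i \<Rightarrow> int"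
  assumes p: "prime p" "odd p" and S: "finite S"
    and sum: "(\<Sum>i\<in>S. root_of_unity p powi r i) \<in> \<int>"
  shows "int p dvd (\<Sum>i\<in>S. r i)"
proof -
  obtain c where c: "(\<Sum>i\<in>S. root_of_unity p powi r i) = of_int c"
    using sum by (elim Ints_cases)
  have p2: "p \<ge> 2"
    using p(1) by (rule prime_ge_2_nat)
  define s where "s i = nat (r i mod int p)" for i
  define Q where "Q = (\<Sum>i\<in>S. monom 1 (s i)) + [:- c:]"
  have "ipoly Q (root_of_unity p) = 0"
    using c p2 by (simp add: Q_def s_def ipoly_add ipoly_sum root_of_unity_powi_eq_power)
  moreover have "prime_elem (geometric_poly p :: int poly)"
    using irreducible_geometric_poly[OF p(1)] by (rule irreducible_imp_prime_poly)
  moreover have "lead_coeff (geometric_poly p :: int poly) = 1"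
    using p2 by (simp add: degree_geometric_poly coeff_geometric_poly)
  ultimately have "geometric_poly p dvd Q"
    using ipoly_geometric_poly_root_of_unity[OF p2] dvd_if_ipoly_root by blast
  then have "int p dvd poly (pderiv Q) 1"
    using p(2) by (intro dvd_poly_pderiv_1_if_geometric_poly_dvd)
  also have "poly (pderiv Q) 1 = (\<Sum>i\<in>S. int (s i))"
    by (simp add: Q_def pderiv_add higher_pderiv_sum[of 1, simplified] poly_sum pderiv_monom
        poly_monom pderiv_pCons)
  also have "\<dots> = (\<Sum>i\<in>S. r i mod int p)"
    using p2 by (simp add: s_def)
  finally show ?thesis
    by (simp add: mod_sum_eq dvd_eq_mod_eq_0)
qed

section \<open>Periodic sequences\<close>

lemma periodic_add_mult:
  fixes f :: "int \<Rightarrow> 'b" and q :: int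
  assumes "\<And>i. f (i + N) = f i"
  shows "f (i + q * N) = f i"
proof (induction q rule: int_induct[where k = 0])
  case (step1 q)
  then show ?case
    using assms[of "i + q * N"] by (simp add: algebra_simps)
next
  case (step2 q)
  then show ?case
    using assms[of "i + (q - 1) * N"] by (simp add: algebra_simps)
qed simp

lemma periodic_mod:
  fixes f :: "int \<Rightarrow> 'b"
  assumes "\<And>i. f (i + N) = f i"
  shows "f (i mod N) = f i"
  using periodic_add_mult[of f N "i mod N" "i div N", OF assms] by simp

lemma periodic_cong:
  fixes f :: "int \<Rightarrow> 'b"
  assumes "\<And>i. f (i + N) = f i" and "i mod N = i' mod N"
  shows "f i = f i'"
  by (metis assms periodic_mod)

lemma sum_periodic_shift:
  fixes f :: "int \<Rightarrow> 'b :: comm_monoid_add"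
  assumes "\<And>i. f (i + N) = f i" and "N > 0"
  shows "(\<Sum>i\<in>{0..<N}. f (i + t)) = (\<Sum>i\<in>{0..<N}. f i)"
proof -
  have "bij_betw (\<lambda>i. (i + t) mod N) {0..<N} {0..<N}"
    by (rule bij_betw_byWitness[where f' = "\<lambda>i. (i - t) mod N"])
      (use assms(2) in \<open>auto simp: mod_diff_left_eq mod_add_left_eq\<close>)
  then have "(\<Sum>i\<in>{0..<N}. f ((i + t) mod N)) = (\<Sum>i\<in>{0..<N}. f i)"
    by (rule sum.reindex_bij_betw)
  then show ?thesis
    by (simp add: periodic_mod[of f N, OF assms(1)])
qed

lemma autocorr_shift:
  assumes "periodic_seq N a" and "N > 0"
  shows "autocorr N (\<lambda>i. a (i + j)) t = autocorr N a t"
proof -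
  have "\<And>i. a (i + N) * cnj (a (i + N + t)) = a i * cnj (a (i + t))"
    using assms(1) by (metis periodic_seq_def add.commute add.left_commute)
  from sum_periodic_shift[of "\<lambda>i. a i * cnj (a (i + t))", OF this assms(2), of j]
  show ?thesis
    unfolding autocorr_def by (simp add: ac_simps)
qed

lemma dvd_of_dvd_consecutive_sums:
  fixes d :: "int \<Rightarrow> int"
  assumes "c dvd d 1" and "\<And>t. 1 \<le> t \<Longrightarrow> t < M \<Longrightarrow> c dvd d t + d (t + 1)"
  shows "1 \<le> k \<Longrightarrow> k \<le> M \<Longrightarrow> c dvd d k"
proof (induction k rule: int_ge_induct)
  case (step k)
  then have "c dvd (d k + d (k + 1)) - d k"
    using assms(2)[of k] by (intro dvd_diff) auto
  then show ?case
    by simp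
qed (use assms(1) in simp)

lemma mod_add_eq_mod_iff:
  fixes i s c N :: int
  assumes "0 \<le> i" and "i < N"
  shows "(i + s) mod N = c mod N \<longleftrightarrow> i = (c - s) mod N"
proof -
  have "(i + s) mod N = c mod N \<longleftrightarrow> i mod N = (c - s) mod N"
    by (simp add: mod_eq_dvd_iff algebra_simps)
  with assms show ?thesis
    by simp
qed

section \<open>Symmetry of sequences with zeros at \<open>0\<close> and \<open>1\<close>\<close>

context
  fixes p :: nat and N :: int and a :: "int \<Rightarrow> complex" and e :: "int \<Rightarrow> int"
  assumes p_prime: "prime p" and p_odd: "odd p" and N: "N \<ge> 2"
    and e_periodic: "\<And>i. e (i + N) = e i"
    and zeros: "\<And>i. a i = 0 \<longleftrightarrow> i mod N \<in> {0, 1}"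
    and exponent: "\<And>i. a i \<noteq> 0 \<Longrightarrow> a i = root_of_unity p powi e i"
    and exponent_zero: "\<And>i. a i = 0 \<Longrightarrow> e i = 0"
begin

lemma sum_over_nonzero_shift:
  fixes f :: "int \<Rightarrow> int"
  shows "(\<Sum>i\<in>{i\<in>{0..<N}. a (i + s) \<noteq> 0}. f i)
    = (\<Sum>i\<in>{0..<N}. f i) - f ((- s) mod N) - f ((1 - s) mod N)"
proof -
  let ?Z = "{(- s) mod N, (1 - s) mod N}"
  have "a (i + s) = 0 \<longleftrightarrow> i \<in> ?Z" if "0 \<le> i" "i < N" for i
  proof -
    have "a (i + s) = 0 \<longleftrightarrow> (i + s) mod N = 0 mod N \<or> (i + s) mod N = 1 mod N"
      using N by (simp add: zeros)
    also have "\<dots> \<longleftrightarrow> i \<in> ?Z"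
      using mod_add_eq_mod_iff[OF that, of s 0] mod_add_eq_mod_iff[OF that, of s 1] by simp
    finally show ?thesis .
  qed
  then have nonzeros: "{i\<in>{0..<N}. a (i + s) \<noteq> 0} = {0..<N} - ?Z" and "?Z \<subseteq> {0..<N}"
    using N by auto
  then have "(\<Sum>i\<in>{0..<N}. f i)
      = (\<Sum>i\<in>{i\<in>{0..<N}. a (i + s) \<noteq> 0}. f i) + (\<Sum>i\<in>?Z. f i)"
    by (simp add: sum.subset_diff)
  moreover have "(- s) mod N \<noteq> (1 - s) mod N"
    using N by (auto simp: mod_eq_dvd_iff zdvd_not_zless)
  ultimately show ?thesis
    by simp
qed

lemma autocorr_eq_root_of_unity_sum:
  "autocorr N a t
    = (\<Sum>i\<in>{i\<in>{0..<N}. a i \<noteq> 0 \<and> a (i + t) \<noteq> 0}. root_of_unity p powi (e i - e (i + t)))"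
  unfolding autocorr_def
proof (rule sym, rule sum.mono_neutral_cong_left)
  fix i
  assume "i \<in> {i\<in>{0..<N}. a i \<noteq> 0 \<and> a (i + t) \<noteq> 0}"
  then have "a i * cnj (a (i + t)) = root_of_unity p powi e i * root_of_unity p powi (- e (i + t))"
    using exponent[of i] exponent[of "i + t"]
    by (simp add: cnj_root_of_unity power_int_minus power_int_inverse)
  then show "root_of_unity p powi (e i - e (i + t)) = a i * cnj (a (i + t))"
    by (simp add: power_int_add[symmetric])
qed auto

lemma sum_exponent_differences:
  "(\<Sum>i\<in>{i\<in>{0..<N}. a i \<noteq> 0 \<and> a (i + t) \<noteq> 0}. e i - e (i + t))
    = e t + e (t + 1) - e (- t) - e (1 - t)"
proof -
  let ?D = "{i\<in>{0..<N}. a i \<noteq> 0 \<and> a (i + t) \<noteq> 0}"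
  have "(\<Sum>i\<in>?D. e i) = (\<Sum>i\<in>{i\<in>{0..<N}. a (i + t) \<noteq> 0}. e i)"
    by (rule sum.mono_neutral_left) (auto simp: exponent_zero intro: finite_subset[of _ "{0..<N}"])
  also have "\<dots> = (\<Sum>i\<in>{0..<N}. e i) - e (- t) - e (1 - t)"
    by (simp only: sum_over_nonzero_shift periodic_mod[of e N, OF e_periodic])
  finally have first: "(\<Sum>i\<in>?D. e i) = (\<Sum>i\<in>{0..<N}. e i) - e (- t) - e (1 - t)" .
  have "(\<Sum>i\<in>?D. e (i + t)) = (\<Sum>i\<in>{i\<in>{0..<N}. a (i + 0) \<noteq> 0}. e (i + t))"
    by (rule sum.mono_neutral_left) (auto simp: exponent_zero intro: finite_subset[of _ "{0..<N}"])
  also have "\<dots> = (\<Sum>i\<in>{0..<N}. e (i + t)) - e t - e (t + 1)"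
    using N by (simp only: sum_over_nonzero_shift) (simp add: add.commute)
  also have "\<dots> = (\<Sum>i\<in>{0..<N}. e i) - e t - e (t + 1)"
    using N by (simp add: sum_periodic_shift[of e N, OF e_periodic])
  finally have second: "(\<Sum>i\<in>?D. e (i + t)) = (\<Sum>i\<in>{0..<N}. e i) - e t - e (t + 1)" .
  show ?thesis
    unfolding sum_subtractf first second by simp
qed

lemma exponent_congruence:
  assumes "autocorr N a t \<in> \<int>"
  shows "int p dvd e t + e (t + 1) - e (- t) - e (1 - t)"
proof -
  have "finite {i\<in>{0..<N}. a i \<noteq> 0 \<and> a (i + t) \<noteq> 0}"
    by (rule finite_subset[of _ "{0..<N}"]) auto
  from dvd_exponent_sum_if_root_of_unity_sum_in_Ints[OF p_prime p_odd this
      assms[unfolded autocorr_eq_root_of_unity_sum]]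
  show ?thesis
    by (simp only: sum_exponent_differences)
qed

lemma zero_reflect: "a x = 0 \<Longrightarrow> a (1 - x) = 0"
proof -
  have "(1 - x) mod N = (1 - x mod N) mod N"
    by (simp add: mod_diff_right_eq)
  then show "a x = 0 \<Longrightarrow> a (1 - x) = 0"
    using N by (auto simp: zeros)
qed

lemma symmetric_if_autocorr_in_Ints:
  assumes autocorr: "\<And>t. t \<in> {1..N - 1} \<Longrightarrow> autocorr N a t \<in> \<int>"
  shows "a x = a (1 - x)"
proof (cases "a x = 0")
  case True
  then show ?thesis
    using zero_reflect by simp
next
  case False
  then have "a (1 - x) \<noteq> 0"
    using zero_reflect[of "1 - x"] by auto
  define d where "d x = e x - e (1 - x)" for x
  \<comment> \<open>the congruence for the lag \<open>t\<close> says exactly that \<open>d t + d (t + 1) \<equiv> 0 (mod p)\<close>\<close>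
  have chain: "int p dvd d k" if "1 \<le> k" "k \<le> N" for k
  proof (rule dvd_of_dvd_consecutive_sums[OF _ _ that])
    show "int p dvd d 1"
      using N by (simp add: d_def exponent_zero zeros)
    show "int p dvd d t + d (t + 1)" if "1 \<le> t" "t < N" for t
      using exponent_congruence[OF autocorr[of t]] that by (simp add: d_def algebra_simps)
  qed
  have "0 \<le> (x - 1) mod N" "(x - 1) mod N < N"
    using N by simp_all
  then have "1 \<le> (x - 1) mod N + 1" "(x - 1) mod N + 1 \<le> N"
    by simp_all
  then have "int p dvd d ((x - 1) mod N + 1)"
    by (rule chain)
  moreover have "d x = d ((x - 1) mod N + 1)"
  proof (rule periodic_cong[of d N])
    show "d (i + N) = d i" for i
      using e_periodic[of i] e_periodic[of "1 - i - N"] by (simp add: d_def algebra_simps)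
    show "x mod N = ((x - 1) mod N + 1) mod N"
      by (simp add: mod_add_left_eq)
  qed
  ultimately have "int p dvd e x - e (1 - x)"
    by (simp add: d_def)
  then have "e x mod int p = e (1 - x) mod int p"
    by (simp add: mod_eq_dvd_iff)
  then show ?thesis
    using False \<open>a (1 - x) \<noteq> 0\<close> exponent[of x] exponent[of "1 - x"]
    by (metis root_of_unity_powi_mod)
qed

end

section \<open>Almost \<open>m\<close>-ary nearly perfect sequences\<close>

lemma almost_mary_nonzero_eq_root_of_unity_powi:
  assumes "almost_mary m N s a" and "N > 0" and "a i \<noteq> 0"
  shows "\<exists>k. a i = root_of_unity m powi k"
proof -
  have periodic: "a (i mod N) = a i"
    using assms(1) by (intro periodic_mod) (simp add: almost_mary_def periodic_seq_def)
  have "i mod N \<in> {0..<N}"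
    using assms(2) by simp
  then have "a (i mod N) \<noteq> 0 \<longrightarrow> (\<exists>k. a (i mod N) = root_of_unity m powi k)"
    using assms(1) by (simp add: almost_mary_def)
  with periodic assms(3) show ?thesis
    by simp
qed

lemma almost_mary_exponents:
  assumes "almost_mary m N s a" and "N > 0"
  obtains e :: "int \<Rightarrow> int"
  where "\<And>i. e (i + N) = e i"
    and "\<And>i. a i \<noteq> 0 \<Longrightarrow> a i = root_of_unity m powi e i"
    and "\<And>i. a i = 0 \<Longrightarrow> e i = 0"
proof
  define e where "e i = (if a i = 0 then 0 else SOME k. a i = root_of_unity m powi k)" for i
  show "e (i + N) = e i" for i
    using assms(1) by (simp add: e_def almost_mary_def periodic_seq_def)
  show "a i = root_of_unity m powi e i" if "a i \<noteq> 0" for i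
    using almost_mary_nonzero_eq_root_of_unity_powi[OF assms that]
    by (auto simp: e_def that intro: someI_ex)
  show "e i = 0" if "a i = 0" for i
    using that by (simp add: e_def)
qed

lemma nearly_perfect_autocorr_in_Ints:
  assumes "nearly_perfect N a (of_int g1) (of_int g2)" and "t \<in> {1..N - 1}"
  shows "autocorr N a t \<in> \<int>"
proof -
  have "autocorr N a t = of_int g1 \<or> autocorr N a t = of_int g2"
    using assms by (simp add: nearly_perfect_def)
  then show ?thesis
    by auto
qed

lemma almost_mary_two_consecutive_zeros:
  assumes "almost_mary m N 2 a" and "N \<ge> 2" and "a j = 0" and "a (j + 1) = 0"
  shows "a i = 0 \<longleftrightarrow> (i - j) mod N \<in> {0, 1}"
proof -
  define Z where "Z = {i\<in>{0..<N}. a i = 0}"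
  have periodic: "\<And>i. a (i + N) = a i"
    using assms(1) by (simp add: almost_mary_def periodic_seq_def)
  have "{j mod N, (j + 1) mod N} \<subseteq> Z"
    using assms(2-4) periodic_mod[of a N, OF periodic] by (auto simp: Z_def)
  moreover have "j mod N \<noteq> (j + 1) mod N"
    using assms(2) by (auto simp: mod_eq_dvd_iff zdvd_not_zless)
  moreover have "card Z = 2"
    using assms(1) by (simp add: Z_def almost_mary_def)
  moreover have "finite Z"
    unfolding Z_def by (rule finite_subset[of _ "{0..<N}"]) auto
  ultimately have Z: "Z = {j mod N, (j + 1) mod N}"
    by (metis card_2_iff card_subset_eq)
  have "a i = 0 \<longleftrightarrow> i mod N \<in> Z"
    using assms(2) periodic_mod[of a N, OF periodic] by (simp add: Z_def)
  also have "\<dots> \<longleftrightarrow> (i - j) mod N \<in> {0 mod N, 1 mod N}"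
    by (simp add: Z mod_eq_dvd_iff dvd_eq_mod_eq_0[symmetric] algebra_simps)
  finally show ?thesis
    using assms(2) by simp
qed

theorem corollary1:
  fixes m n :: nat and g1 g2 :: int and a :: "int \<Rightarrow> complex" and j :: int
  assumes "prime m" and "odd m" and "n \<ge> 1"
    and "almost_mary m (int n + 2) 2 a"
    and "nearly_perfect (int n + 2) a (of_int g1) (of_int g2)"
    and "a j = 0" and "a (j + 1) = 0"
  shows "\<forall>x. a x = a (2 * j + 1 - x)"
proof
  fix x
  define N where "N = int n + 2"
  have N: "N \<ge> 2"
    by (simp add: N_def)
  note almost_mary = assms(4)[folded N_def]
  obtain e where e_periodic: "\<And>i. e (i + N) = e i"
    and exponent: "\<And>i. a i \<noteq> 0 \<Longrightarrow> a i = root_of_unity m powi e i"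
    and exponent_zero: "\<And>i. a i = 0 \<Longrightarrow> e i = 0"
    using almost_mary_exponents[OF almost_mary] N by auto
  have "a ((x - j) + j) = a ((1 - (x - j)) + j)"
  proof (rule symmetric_if_autocorr_in_Ints[OF assms(1,2) N, where e = "\<lambda>i. e (i + j)"])
    show "e (i + N + j) = e (i + j)" for i
      using e_periodic[of "i + j"] by (simp add: ac_simps)
    show "a (i + j) = 0 \<longleftrightarrow> i mod N \<in> {0, 1}" for i
      using almost_mary_two_consecutive_zeros[OF almost_mary N assms(6,7)] by simp
    show "autocorr N (\<lambda>i. a (i + j)) t \<in> \<int>" if "t \<in> {1..N - 1}" for t
      using autocorr_shift[of N a j t] nearly_perfect_autocorr_in_Ints[OF assms(5)[folded N_def] that]
        almost_mary N by (simp add: almost_mary_def)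
  qed (use exponent exponent_zero in auto)
  then show "a x = a (2 * j + 1 - x)"
    by (simp add: algebra_simps)
qed

end
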